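(* Let $(X,\sigma,\tau)$ be a full, separable, chronologically dense Lorentzian metric space satisfying the S-property which is globally hyperbolic with respect to a compatible causal relation $\leq$, and let $(\overline{X},\sigma_{chr},\overline{\tau})$ be its c-completion. Assume that no two distinct points of $\partial X$ are related by $\leq_{\overline{\tau}}$. Then for any $(P,F)\in\overline{X}$ and any $\sigma_{chr}$-neighbourhood $U$ of $(P,F)$ there is a $\sigma_{chr}$-neighbourhood $V$ of $(P,F)$ such that whenever $a,b,c\in\overline{X}$ satisfy $a\,\overline{\ll}\,b\,\overline{\ll}\,c$ and $a,c\in V$, then $b\in U$.
   Context: A Lorentzian metric space $(X,\sigma,\tau)$ is a topological space with $\tau:X\times X\to[0,\infty]$ lower semicontinuous and satisfying $\tau(x,z)\geq\tau(x,y)+\tau(y,z)$ whenever $\tau(x,y),\tau(y,z)>0$. Write $x\ll y$ iff $\tau(x,y)>0$, $I^\pm(x)$ for chronological future/past, $I^\pm[A]=\bigcup_{a\in A}I^\pm(a)$. Full: $I^+(x)\neq\emptyset\neq I^-(x)$ for all $x$. Future (resp. past) chain: $x_n\ll x_{n+1}$ (resp. $x_{n+1}\ll x_n$) for all $n$. Separable: there is a countable $S$ with $x\ll y\Rightarrow\exists s\in S$, $x\ll s\ll y$. Chronologically dense: every $x$ with $I^-(x)\neq\emptyset$ (resp. $I^+(x)\neq\emptyset$) is the $\sigma$-limit of a future (resp. past) chain. A compatible causal relation is a pre-order $\leq$ containing $\ll$ with $\tau(x,z)\geq\tau(x,y)+\tau(y,z)$ for $x\leq y\leq z$; with $J(x,y)=\{z:x\leq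 z\leq y\}$, $X$ is globally hyperbolic if $\leq$ is antisymmetric and every $J(x,y)$ is $\sigma$-compact. Past set: $P=I^-[P]$; $\downarrow S=I^-[\{p:p\ll q\ \forall q\in S\}]$; IP: past set not the union of two proper past subsets; PIP: IP of the form $I^-(p)$; future sets, $\uparrow S$, IF, PIF dually. For nonempty IP $P$ and IF $F$, $P\sim_S F$ iff $P$ is a maximal IP in $\downarrow F$ and $F$ a maximal IF in $\uparrow P$; $P\sim_S\emptyset$ (resp. $\emptyset\sim_S F$) if the nonempty $P$ (resp. $F$) is S-related to no nonempty IF (resp. IP). S-property: for all $x$, $I^-(x)\sim_S I^+(x)$, and no PIF other than $I^+(x)$ (resp. no PIP other than $I^-(x)$) is S-related to $I^-(x)$ (resp. $I^+(x)$). c-completion $\overline X=\{(P,F):P\sim_S F\}$, $\mathbf{i}(x)=(I^-(x),I^+(x))$, $\partial X=\overline X\setminus\mathbf{i}(X)$. $\sigma_{chr}$: closed sets are those $C$ with $L(s)\subset C$ for every sequence $s$ in $C$, where $(P,F)\in L(\{(P_n,F_n)\})$ iff ($P\neq\emptyset\Rightarrow P\subset LI(P_n)$ and $P$ is a maximal IP in $LS(P_n)$) and ($F\neq\emptyset\Rightarrow F\subset LI(F_n)$ and $F$ is a maximal IF in $LS(F_n)$), $LI,LS$ the set-theoretic lower/upper limits. $\overline\tau((P,F),(P',F'))=0$ if $F=\emptyset$ or $P'=\emptyset$, otherwise $\lim_n\tau(q_n,p'_n)$ for a past chain $\{q_n\}$ with $I^+[\{q_n\}]=F$ and a future chain $\{p'_n\}$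 with $I^-[\{p'_n\}]=P'$. $a\,\overline\ll\, b$ iff $\overline\tau(a,b)>0$; $\overline I^\pm(a)$ denote the corresponding futures/pasts in $\overline X$; $a\leq_{\overline\tau}b$ iff $\overline I^-(a)\subset\overline I^-(b)$ and $\overline I^+(b)\subset\overline I^+(a)$. *)

theory Defs
  imports "HOL-Analysis.Analysis"
begin

text \<open>The point set X is the whole type 'a (topspace sig = UNIV); the
time separation tau takes values in [0,\<infinity>] (type ennreal).\<close>

definition chr :: "('a \<Rightarrow> 'a \<Rightarrow> ennreal) \<Rightarrow> 'a \<Rightarrow> 'a \<Rightarrow> bool" where
  "chr tau x y \<longleftrightarrow> 0 < tau x y"

definition Ifut :: "('a \<Rightarrow> 'a \<Rightarrow> ennreal) \<Rightarrow> 'a \<Rightarrow> 'a set" where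
  "Ifut tau x = {y. chr tau x y}"

definition Ipast :: "('a \<Rightarrow> 'a \<Rightarrow> ennreal) \<Rightarrow> 'a \<Rightarrow> 'a set" where
  "Ipast tau x = {y. chr tau y x}"

definition Ifut_set :: "('a \<Rightarrow> 'a \<Rightarrow> ennreal) \<Rightarrow> 'a set \<Rightarrow> 'a set" where
  "Ifut_set tau A = (\<Union>a\<in>A. Ifut tau a)"

definition Ipast_set :: "('a \<Rightarrow> 'a \<Rightarrow> ennreal) \<Rightarrow> 'a set \<Rightarrow> 'a set" where
  "Ipast_set tau A = (\<Union>a\<in>A. Ipast tau a)"

definition lorentzian_metric_space :: "'a topology \<Rightarrow> ('a \<Rightarrow> 'a \<Rightarrow> ennreal) \<Rightarrow> bool" where
  "lorentzian_metric_space sig tau \<longleftrightarrow>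
     topspace sig = UNIV \<and>
     (\<forall>t. openin (prod_topology sig sig) {z. t < tau (fst z) (snd z)}) \<and>
     (\<forall>x y z. 0 < tau x y \<and> 0 < tau y z \<longrightarrow> tau x y + tau y z \<le> tau x z)"

definition full :: "('a \<Rightarrow> 'a \<Rightarrow> ennreal) \<Rightarrow> bool" where
  "full tau \<longleftrightarrow> (\<forall>x. Ifut tau x \<noteq> {} \<and> Ipast tau x \<noteq> {})"

definition future_chain :: "('a \<Rightarrow> 'a \<Rightarrow> ennreal) \<Rightarrow> (nat \<Rightarrow> 'a) \<Rightarrow> bool" where
  "future_chain tau c \<longleftrightarrow> (\<forall>n. chr tau (c n) (c (Suc n)))"

definition past_chain :: "('a \<Rightarrow> 'a \<Rightarrow> ennreal) \<Rightarrow> (nat \<Rightarrow> 'a) \<Rightarrow> bool" where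
  "past_chain tau c \<longleftrightarrow> (\<forall>n. chr tau (c (Suc n)) (c n))"

definition separable_lms :: "('a \<Rightarrow> 'a \<Rightarrow> ennreal) \<Rightarrow> bool" where
  "separable_lms tau \<longleftrightarrow>
     (\<exists>S. countable S \<and> (\<forall>x y. chr tau x y \<longrightarrow> (\<exists>s\<in>S. chr tau x s \<and> chr tau s y)))"

definition chron_dense :: "'a topology \<Rightarrow> ('a \<Rightarrow> 'a \<Rightarrow> ennreal) \<Rightarrow> bool" where
  "chron_dense sig tau \<longleftrightarrow>
     (\<forall>x. Ipast tau x \<noteq> {} \<longrightarrow>
          (\<exists>c. future_chain tau c \<and> limitin sig c x sequentially)) \<and>
     (\<forall>x. Ifut tau x \<noteq> {} \<longrightarrow>
          (\<exists>c. past_chain tau c \<and> limitin sig c x sequentially))"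

definition compatible_causal :: "('a \<Rightarrow> 'a \<Rightarrow> ennreal) \<Rightarrow> ('a \<Rightarrow> 'a \<Rightarrow> bool) \<Rightarrow> bool" where
  "compatible_causal tau le \<longleftrightarrow>
     (\<forall>x. le x x) \<and> (\<forall>x y z. le x y \<and> le y z \<longrightarrow> le x z) \<and>
     (\<forall>x y. chr tau x y \<longrightarrow> le x y) \<and>
     (\<forall>x y z. le x y \<and> le y z \<longrightarrow> tau x y + tau y z \<le> tau x z)"

definition Jdiamond :: "('a \<Rightarrow> 'a \<Rightarrow> bool) \<Rightarrow> 'a \<Rightarrow> 'a \<Rightarrow> 'a set" where
  "Jdiamond le x y = {z. le x z \<and> le z y}"

definition globally_hyperbolic :: "'a topology \<Rightarrow> ('a \<Rightarrow> 'a \<Rightarrow> ennreal) \<Rightarrow> ('a \<Rightarrow> 'a \<Rightarrow> bool) \<Rightarrow> bool" where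
  "globally_hyperbolic sig tau le \<longleftrightarrow>
     compatible_causal tau le \<and>
     (\<forall>x y. le x y \<and> le y x \<longrightarrow> x = y) \<and>
     (\<forall>x y. compactin sig (Jdiamond le x y))"

definition past_set :: "('a \<Rightarrow> 'a \<Rightarrow> ennreal) \<Rightarrow> 'a set \<Rightarrow> bool" where
  "past_set tau P \<longleftrightarrow> P = Ipast_set tau P"

definition future_set :: "('a \<Rightarrow> 'a \<Rightarrow> ennreal) \<Rightarrow> 'a set \<Rightarrow> bool" where
  "future_set tau F \<longleftrightarrow> F = Ifut_set tau F"

definition common_past :: "('a \<Rightarrow> 'a \<Rightarrow> ennreal) \<Rightarrow> 'a set \<Rightarrow> 'a set" where
  "common_past tau S = Ipast_set tau {p. \<forall>q\<in>S. chr tau p q}"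

definition common_future :: "('a \<Rightarrow> 'a \<Rightarrow> ennreal) \<Rightarrow> 'a set \<Rightarrow> 'a set" where
  "common_future tau S = Ifut_set tau {p. \<forall>q\<in>S. chr tau q p}"

definition IP :: "('a \<Rightarrow> 'a \<Rightarrow> ennreal) \<Rightarrow> 'a set \<Rightarrow> bool" where
  "IP tau P \<longleftrightarrow> P \<noteq> {} \<and> past_set tau P \<and>
     \<not> (\<exists>P1 P2. past_set tau P1 \<and> past_set tau P2 \<and> P1 \<subset> P \<and> P2 \<subset> P \<and> P = P1 \<union> P2)"

definition IF :: "('a \<Rightarrow> 'a \<Rightarrow> ennreal) \<Rightarrow> 'a set \<Rightarrow> bool" where
  "IF tau F \<longleftrightarrow> F \<noteq> {} \<and> future_set tau F \<and>
     \<not> (\<exists>F1 F2. future_set tau F1 \<and> future_set tau F2 \<and> F1 \<subset> F \<and> F2 \<subset> F \<and> F = F1 \<union> F2)"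

definition maxIP_in :: "('a \<Rightarrow> 'a \<Rightarrow> ennreal) \<Rightarrow> 'a set \<Rightarrow> 'a set \<Rightarrow> bool" where
  "maxIP_in tau P A \<longleftrightarrow> IP tau P \<and> P \<subseteq> A \<and>
     (\<forall>P'. IP tau P' \<and> P \<subseteq> P' \<and> P' \<subseteq> A \<longrightarrow> P' = P)"

definition maxIF_in :: "('a \<Rightarrow> 'a \<Rightarrow> ennreal) \<Rightarrow> 'a set \<Rightarrow> 'a set \<Rightarrow> bool" where
  "maxIF_in tau F A \<longleftrightarrow> IF tau F \<and> F \<subseteq> A \<and>
     (\<forall>F'. IF tau F' \<and> F \<subseteq> F' \<and> F' \<subseteq> A \<longrightarrow> F' = F)"

definition S_rel_ne :: "('a \<Rightarrow> 'a \<Rightarrow> ennreal) \<Rightarrow> 'a set \<Rightarrow> 'a set \<Rightarrow> bool" where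
  "S_rel_ne tau P F \<longleftrightarrow> IP tau P \<and> IF tau F \<and>
     maxIP_in tau P (common_past tau F) \<and> maxIF_in tau F (common_future tau P)"

definition S_rel :: "('a \<Rightarrow> 'a \<Rightarrow> ennreal) \<Rightarrow> 'a set \<Rightarrow> 'a set \<Rightarrow> bool" where
  "S_rel tau P F \<longleftrightarrow>
     (P \<noteq> {} \<and> F \<noteq> {} \<and> S_rel_ne tau P F) \<or>
     (P \<noteq> {} \<and> F = {} \<and> IP tau P \<and> \<not> (\<exists>F'. F' \<noteq> {} \<and> S_rel_ne tau P F')) \<or>
     (P = {} \<and> F \<noteq> {} \<and> IF tau F \<and> \<not> (\<exists>P'. P' \<noteq> {} \<and> S_rel_ne tau P' F))"

definition S_property :: "('a \<Rightarrow> 'a \<Rightarrow> ennreal) \<Rightarrow> bool" where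
  "S_property tau \<longleftrightarrow>
     (\<forall>x. S_rel tau (Ipast tau x) (Ifut tau x) \<and>
          (\<forall>y. S_rel tau (Ipast tau x) (Ifut tau y) \<longrightarrow> Ifut tau y = Ifut tau x) \<and>
          (\<forall>y. S_rel tau (Ipast tau y) (Ifut tau x) \<longrightarrow> Ipast tau y = Ipast tau x))"

definition cX :: "('a \<Rightarrow> 'a \<Rightarrow> ennreal) \<Rightarrow> ('a set \<times> 'a set) set" where
  "cX tau = {(P, F). S_rel tau P F}"

definition cinj :: "('a \<Rightarrow> 'a \<Rightarrow> ennreal) \<Rightarrow> 'a \<Rightarrow> 'a set \<times> 'a set" where
  "cinj tau x = (Ipast tau x, Ifut tau x)"

definition cboundary :: "('a \<Rightarrow> 'a \<Rightarrow> ennreal) \<Rightarrow> ('a set \<times> 'a set) set" where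
  "cboundary tau = cX tau - range (cinj tau)"

definition LI :: "(nat \<Rightarrow> 'a set) \<Rightarrow> 'a set" where
  "LI A = {x. \<forall>\<^sub>F n in sequentially. x \<in> A n}"

definition LS :: "(nat \<Rightarrow> 'a set) \<Rightarrow> 'a set" where
  "LS A = {x. \<exists>\<^sub>F n in sequentially. x \<in> A n}"

definition chr_limits :: "('a \<Rightarrow> 'a \<Rightarrow> ennreal) \<Rightarrow> (nat \<Rightarrow> 'a set \<times> 'a set) \<Rightarrow> ('a set \<times> 'a set) set" where
  "chr_limits tau s = {(P, F) \<in> cX tau.
     (P \<noteq> {} \<longrightarrow> P \<subseteq> LI (\<lambda>n. fst (s n)) \<and> maxIP_in tau P (LS (\<lambda>n. fst (s n)))) \<and>
     (F \<noteq> {} \<longrightarrow> F \<subseteq> LI (\<lambda>n. snd (s n)) \<and> maxIF_in tau F (LS (\<lambda>n. snd (s n))))}"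

definition chr_closed :: "('a \<Rightarrow> 'a \<Rightarrow> ennreal) \<Rightarrow> ('a set \<times> 'a set) set \<Rightarrow> bool" where
  "chr_closed tau C \<longleftrightarrow> C \<subseteq> cX tau \<and>
     (\<forall>s. (\<forall>n. s n \<in> C) \<longrightarrow> chr_limits tau s \<subseteq> C)"

definition sigma_chr :: "('a \<Rightarrow> 'a \<Rightarrow> ennreal) \<Rightarrow> ('a set \<times> 'a set) topology" where
  "sigma_chr tau = topology (\<lambda>U. U \<subseteq> cX tau \<and> chr_closed tau (cX tau - U))"

definition nbhd :: "'b topology \<Rightarrow> 'b set \<Rightarrow> 'b \<Rightarrow> bool" where
  "nbhd T U p \<longleftrightarrow> (\<exists>W. openin T W \<and> p \<in> W \<and> W \<subseteq> U)"

definition ctau :: "('a \<Rightarrow> 'a \<Rightarrow> ennreal) \<Rightarrow> 'a set \<times> 'a set \<Rightarrow> 'a set \<times> 'a set \<Rightarrow> ennreal" where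
  "ctau tau a b =
     (if snd a = {} \<or> fst b = {} then 0
      else (let q = (SOME q. past_chain tau q \<and> Ifut_set tau (range q) = snd a);
                p = (SOME p. future_chain tau p \<and> Ipast_set tau (range p) = fst b)
            in lim (\<lambda>n. tau (q n) (p n))))"

definition cchr :: "('a \<Rightarrow> 'a \<Rightarrow> ennreal) \<Rightarrow> 'a set \<times> 'a set \<Rightarrow> 'a set \<times> 'a set \<Rightarrow> bool" where
  "cchr tau a b \<longleftrightarrow> 0 < ctau tau a b"

definition cIfut :: "('a \<Rightarrow> 'a \<Rightarrow> ennreal) \<Rightarrow> 'a set \<times> 'a set \<Rightarrow> ('a set \<times> 'a set) set" where
  "cIfut tau a = {b \<in> cX tau. cchr tau a b}"

definition cIpast :: "('a \<Rightarrow> 'a \<Rightarrow> ennreal) \<Rightarrow> 'a set \<times> 'a set \<Rightarrow> ('a set \<times> 'a set) set" where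
  "cIpast tau a = {b \<in> cX tau. cchr tau b a}"

definition cle :: "('a \<Rightarrow> 'a \<Rightarrow> ennreal) \<Rightarrow> 'a set \<times> 'a set \<Rightarrow> 'a set \<times> 'a set \<Rightarrow> bool" where
  "cle tau a b \<longleftrightarrow> cIpast tau a \<subseteq> cIpast tau b \<and> cIfut tau b \<subseteq> cIfut tau a"

end

theory Submission
  imports Defs
begin

text \<open>Write p = (P, F) and fix chains x, y generating P and F. The points whose past
  contains x n and whose future contains y n form a sigma_chr-open neighbourhood V n of p.
  If no V n worked, there would be points b n outside U lying chronologically between
  points of V n; their pasts contain x n and their futures y n, so P and F lie in the lower
  limits of these pasts and futures. P is even maximal in the upper limit: for nonempty F
  by the S-relation of P and F; for empty F because an IP bounded above is a PIP (global
  hyperbolicity), which the S-property excludes, while otherwise (P, {}) and (P', {}) are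
  related boundary points, hence equal. So p is a chronological limit of the b n, which
  lie in a closed set avoiding a neighbourhood of p. Statements about futures follow from
  those about pasts by reversing the time orientation.\<close>

lemma mem_Ipast_set: "w \<in> Ipast_set tau A \<longleftrightarrow> (\<exists>a\<in>A. chr tau w a)"
  unfolding Ipast_set_def Ipast_def by blast

lemma mem_Ifut_set: "w \<in> Ifut_set tau A \<longleftrightarrow> (\<exists>a\<in>A. chr tau a w)"
  unfolding Ifut_set_def Ifut_def by blast

lemma past_set_downward_closed: "past_set tau P \<Longrightarrow> a \<in> P \<Longrightarrow> chr tau w a \<Longrightarrow> w \<in> P"
  unfolding past_set_def Ipast_set_def Ipast_def by blast

lemma past_set_has_later: "past_set tau P \<Longrightarrow> w \<in> P \<Longrightarrow> \<exists>a\<in>P. chr tau w a"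
  unfolding past_set_def Ipast_set_def Ipast_def by blast

lemma future_set_has_earlier: "future_set tau F \<Longrightarrow> w \<in> F \<Longrightarrow> \<exists>a\<in>F. chr tau a w"
  unfolding future_set_def Ifut_set_def Ifut_def by blast

lemma past_set_subset_common_past:
  assumes "past_set tau P" and "\<And>w f. w \<in> P \<Longrightarrow> f \<in> F \<Longrightarrow> chr tau w f"
  shows "P \<subseteq> common_past tau F"
proof
  fix w assume "w \<in> P"
  then obtain a where "a \<in> P" "chr tau w a"
    using past_set_has_later[OF assms(1)] by blast
  then show "w \<in> common_past tau F"
    unfolding common_past_def mem_Ipast_set using assms(2) by blast
qed

lemma future_chain_in_Ipast_set: "future_chain tau x \<Longrightarrow> x n \<in> Ipast_set tau (range x)"
  unfolding future_chain_def mem_Ipast_set by blast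

lemma past_chain_in_Ifut_set: "past_chain tau x \<Longrightarrow> x n \<in> Ifut_set tau (range x)"
  unfolding past_chain_def mem_Ifut_set by blast

lemma IP_nonempty: "IP tau P \<Longrightarrow> P \<noteq> {}"
  and IP_past_set: "IP tau P \<Longrightarrow> past_set tau P"
  by (simp_all add: IP_def)

lemma IF_nonempty: "IF tau F \<Longrightarrow> F \<noteq> {}"
  and IF_future_set: "IF tau F \<Longrightarrow> future_set tau F"
  by (simp_all add: IF_def)

lemma S_rel_IP: "S_rel tau P F \<Longrightarrow> P \<noteq> {} \<Longrightarrow> IP tau P"
  unfolding S_rel_def S_rel_ne_def by blast

lemma S_rel_IF: "S_rel tau P F \<Longrightarrow> F \<noteq> {} \<Longrightarrow> IF tau F"
  unfolding S_rel_def S_rel_ne_def by blast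

lemma S_rel_nonempty: "S_rel tau P F \<Longrightarrow> P \<noteq> {} \<Longrightarrow> F \<noteq> {} \<Longrightarrow> S_rel_ne tau P F"
  unfolding S_rel_def by blast

lemma mem_cX: "c \<in> cX tau \<longleftrightarrow> S_rel tau (fst c) (snd c)"
  unfolding cX_def by auto

lemma cX_IP_fst: "c \<in> cX tau \<Longrightarrow> fst c \<noteq> {} \<Longrightarrow> IP tau (fst c)"
  and cX_IF_snd: "c \<in> cX tau \<Longrightarrow> snd c \<noteq> {} \<Longrightarrow> IF tau (snd c)"
  by (simp_all add: mem_cX S_rel_IP S_rel_IF)

lemma chr_limits_iff:
  "q \<in> chr_limits tau s \<longleftrightarrow> q \<in> cX tau \<and>
     (fst q \<noteq> {} \<longrightarrow> fst q \<subseteq> LI (\<lambda>n. fst (s n)) \<and> maxIP_in tau (fst q) (LS (\<lambda>n. fst (s n)))) \<and>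
     (snd q \<noteq> {} \<longrightarrow> snd q \<subseteq> LI (\<lambda>n. snd (s n)) \<and> maxIF_in tau (snd q) (LS (\<lambda>n. snd (s n))))"
  by (cases q) (simp add: chr_limits_def)

section \<open>Time reversal\<close>

definition time_reversal :: "('a \<Rightarrow> 'a \<Rightarrow> ennreal) \<Rightarrow> 'a \<Rightarrow> 'a \<Rightarrow> ennreal" where
  "time_reversal tau x y = tau y x"

lemma chr_time_reversal [simp]: "chr (time_reversal tau) x y \<longleftrightarrow> chr tau y x"
  by (simp add: chr_def time_reversal_def)

lemma Ipast_time_reversal [simp]: "Ipast (time_reversal tau) = Ifut tau"
  and Ifut_time_reversal [simp]: "Ifut (time_reversal tau) = Ipast tau"
  by (simp_all add: fun_eq_iff Ipast_def Ifut_def)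

lemma Ipast_set_time_reversal [simp]: "Ipast_set (time_reversal tau) = Ifut_set tau"
  and Ifut_set_time_reversal [simp]: "Ifut_set (time_reversal tau) = Ipast_set tau"
  by (simp_all add: fun_eq_iff Ipast_set_def Ifut_set_def)

lemma past_set_time_reversal [simp]: "past_set (time_reversal tau) = future_set tau"
  and future_set_time_reversal [simp]: "future_set (time_reversal tau) = past_set tau"
  by (simp_all add: fun_eq_iff past_set_def future_set_def)

lemma IP_time_reversal [simp]: "IP (time_reversal tau) = IF tau"
  and IF_time_reversal [simp]: "IF (time_reversal tau) = IP tau"
  by (simp_all add: fun_eq_iff IP_def IF_def)

lemma common_past_time_reversal [simp]: "common_past (time_reversal tau) = common_future tau"
  and common_future_time_reversal [simp]: "common_future (time_reversal tau) = common_past tau"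
  by (simp_all add: fun_eq_iff common_past_def common_future_def)

lemma maxIP_in_time_reversal [simp]: "maxIP_in (time_reversal tau) = maxIF_in tau"
  and maxIF_in_time_reversal [simp]: "maxIF_in (time_reversal tau) = maxIP_in tau"
  by (simp_all add: fun_eq_iff maxIP_in_def maxIF_in_def)

lemma future_chain_time_reversal [simp]: "future_chain (time_reversal tau) = past_chain tau"
  and past_chain_time_reversal [simp]: "past_chain (time_reversal tau) = future_chain tau"
  by (simp_all add: fun_eq_iff future_chain_def past_chain_def)

lemma S_rel_ne_time_reversal [simp]: "S_rel_ne (time_reversal tau) P F \<longleftrightarrow> S_rel_ne tau F P"
  by (simp add: S_rel_ne_def conj_ac)

lemma S_rel_time_reversal [simp]: "S_rel (time_reversal tau) P F \<longleftrightarrow> S_rel tau F P"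
  unfolding S_rel_def by simp blast

lemma S_property_time_reversal [simp]: "S_property (time_reversal tau) \<longleftrightarrow> S_property tau"
  by (simp add: S_property_def conj_ac)

lemma full_time_reversal [simp]: "full (time_reversal tau) \<longleftrightarrow> full tau"
  by (auto simp: full_def)

lemma separable_lms_time_reversal [simp]: "separable_lms (time_reversal tau) \<longleftrightarrow> separable_lms tau"
proof -
  have "(\<forall>x y. chr tau y x \<longrightarrow> (\<exists>s\<in>S. chr tau s x \<and> chr tau y s)) \<longleftrightarrow>
        (\<forall>x y. chr tau x y \<longrightarrow> (\<exists>s\<in>S. chr tau x s \<and> chr tau s y))" for S
    by blast
  then show ?thesis
    unfolding separable_lms_def chr_time_reversal by simp
qed

lemma mem_cX_time_reversal [simp]: "c \<in> cX (time_reversal tau) \<longleftrightarrow> prod.swap c \<in> cX tau"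
  by (simp add: mem_cX)

lemma mem_cboundary_time_reversal [simp]:
  "c \<in> cboundary (time_reversal tau) \<longleftrightarrow> prod.swap c \<in> cboundary tau"
proof -
  have "range (cinj (time_reversal tau)) = prod.swap ` range (cinj tau)"
    by (auto simp: cinj_def)
  then show ?thesis
    by (auto simp: cboundary_def image_iff) (metis swap_swap)+
qed

lemma ctau_time_reversal [simp]:
  "ctau (time_reversal tau) a b = ctau tau (prod.swap b) (prod.swap a)"
  by (auto simp: ctau_def Let_def time_reversal_def)

lemma cchr_time_reversal [simp]:
  "cchr (time_reversal tau) a b \<longleftrightarrow> cchr tau (prod.swap b) (prod.swap a)"
  by (simp add: cchr_def)

lemma cle_time_reversal [simp]:
  "cle (time_reversal tau) a b \<longleftrightarrow> cle tau (prod.swap b) (prod.swap a)"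
  unfolding cle_def cIpast_def cIfut_def subset_iff
  by simp blast

lemma lorentzian_metric_space_time_reversal:
  assumes "lorentzian_metric_space sig tau"
  shows "lorentzian_metric_space sig (time_reversal tau)"
  unfolding lorentzian_metric_space_def
proof (intro conjI allI impI)
  show "topspace sig = UNIV"
    using assms unfolding lorentzian_metric_space_def by blast
  have swap: "continuous_map (prod_topology sig sig) (prod_topology sig sig) (\<lambda>z. (snd z, fst z))"
    by (intro continuous_map_pairedI continuous_map_fst continuous_map_snd)
  show "openin (prod_topology sig sig) {z. t < time_reversal tau (fst z) (snd z)}" for t
    using openin_continuous_map_preimage[OF swap, of "{z. t < tau (fst z) (snd z)}"] assms
    by (simp add: lorentzian_metric_space_def time_reversal_def)
  have "tau z y + tau y x \<le> tau z x" if "0 < tau y x" "0 < tau z y" for x y z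
    using assms that unfolding lorentzian_metric_space_def by blast
  then show "time_reversal tau x y + time_reversal tau y z \<le> time_reversal tau x z"
    if "0 < time_reversal tau x y \<and> 0 < time_reversal tau y z" for x y z
    using that unfolding time_reversal_def by (simp only: add.commute)
qed

lemma compatible_causal_time_reversal:
  assumes "compatible_causal tau le"
  shows "compatible_causal (time_reversal tau) (\<lambda>x y. le y x)"
  unfolding compatible_causal_def
proof (intro conjI allI impI)
  show "le x x" for x
    using assms unfolding compatible_causal_def by blast
  show "le z x" if "le y x \<and> le z y" for x y z
    using assms that unfolding compatible_causal_def by blast
  show "le y x" if "chr (time_reversal tau) x y" for x y
    using assms that unfolding compatible_causal_def chr_time_reversal by blast
  have "tau z y + tau y x \<le> tau z x" if "le y x \<and> le z y" for x y z
    using assms that unfolding compatible_causal_def by blast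
  then show "time_reversal tau x y + time_reversal tau y z \<le> time_reversal tau x z"
    if "le y x \<and> le z y" for x y z
    using that unfolding time_reversal_def by (simp only: add.commute)
qed

lemma globally_hyperbolic_time_reversal:
  assumes "globally_hyperbolic sig tau le"
  shows "globally_hyperbolic sig (time_reversal tau) (\<lambda>x y. le y x)"
proof -
  have gh: "compatible_causal tau le" "\<And>x y. le x y \<Longrightarrow> le y x \<Longrightarrow> x = y"
    "\<And>x y. compactin sig (Jdiamond le x y)"
    using assms unfolding globally_hyperbolic_def by blast+
  have J: "Jdiamond (\<lambda>x y. le y x) x y = Jdiamond le y x" for x y
    by (auto simp: Jdiamond_def)
  show ?thesis
    unfolding globally_hyperbolic_def J
    using gh(2,3) compatible_causal_time_reversal[OF gh(1)] by blast
qed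

section \<open>Separable Lorentzian metric spaces\<close>

locale separable_lorentzian_space =
  fixes sig :: "'a topology" and tau :: "'a \<Rightarrow> 'a \<Rightarrow> ennreal"
  assumes lms: "lorentzian_metric_space sig tau"
    and separable: "separable_lms tau"
begin

lemma time_reversed: "separable_lorentzian_space sig (time_reversal tau)"
  using lms separable
  by unfold_locales (simp_all add: lorentzian_metric_space_time_reversal)

lemma chr_trans:
  assumes "chr tau x y" and "chr tau y z"
  shows "chr tau x z"
proof -
  have "tau x y \<le> tau x y + tau y z"
    by simp
  also have "\<dots> \<le> tau x z"
    using lms assms unfolding lorentzian_metric_space_def chr_def by blast
  finally show ?thesis
    using assms(1) unfolding chr_def by simp
qed

lemma chr_interpolate: "chr tau x y \<Longrightarrow> \<exists>s. chr tau x s \<and> chr tau s y"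
  using separable unfolding separable_lms_def by blast

lemma openin_Ifut: "openin sig (Ifut tau w)"
proof -
  have top: "topspace sig = UNIV"
    using lms unfolding lorentzian_metric_space_def by blast
  have "continuous_map sig (prod_topology sig sig) (\<lambda>v. (w, v))"
    by (intro continuous_map_pairedI) (auto simp: top)
  moreover have "openin (prod_topology sig sig) {z. 0 < tau (fst z) (snd z)}"
    using lms unfolding lorentzian_metric_space_def by blast
  ultimately have "openin sig {v \<in> topspace sig. 0 < tau w v}"
    using openin_continuous_map_preimage by fastforce
  then show ?thesis
    unfolding top Ifut_def chr_def by simp
qed

lemma openin_Ipast: "openin sig (Ipast tau w)"
  using separable_lorentzian_space.openin_Ifut[OF time_reversed] by simp

lemma past_set_Ipast_set: "past_set tau (Ipast_set tau A)"
  unfolding past_set_def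
proof
  show "Ipast_set tau A \<subseteq> Ipast_set tau (Ipast_set tau A)"
  proof
    fix w assume "w \<in> Ipast_set tau A"
    then obtain a s where "a \<in> A" "chr tau w s" "chr tau s a"
      unfolding mem_Ipast_set using chr_interpolate by blast
    then have "s \<in> Ipast_set tau A"
      unfolding mem_Ipast_set by blast
    with \<open>chr tau w s\<close> show "w \<in> Ipast_set tau (Ipast_set tau A)"
      unfolding mem_Ipast_set[of w] by blast
  qed
  show "Ipast_set tau (Ipast_set tau A) \<subseteq> Ipast_set tau A"
    unfolding Ipast_set_def Ipast_def using chr_trans by blast
qed

text \<open>Splitting P according to whether an element lies in the future of u writes it as a
  union of two past sets.\<close>

lemma IP_directed:
  assumes IP: "IP tau P" and "u \<in> P" and "v \<in> P"
  shows "\<exists>w\<in>P. chr tau u w \<and> chr tau v w"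
proof -
  have past: "past_set tau P"
    using IP by (rule IP_past_set)
  define P1 where "P1 = Ipast_set tau {z\<in>P. chr tau u z}"
  define P2 where "P2 = Ipast_set tau {z\<in>P. \<not> chr tau u z}"
  have "P1 \<subseteq> P" "P2 \<subseteq> P"
    unfolding P1_def P2_def mem_Ipast_set subset_iff
    using past_set_downward_closed[OF past] by blast+
  moreover have "P \<subseteq> P1 \<union> P2"
    unfolding P1_def P2_def mem_Ipast_set subset_iff Un_iff
    using past_set_has_later[OF past] by blast
  moreover have "past_set tau P1" "past_set tau P2"
    unfolding P1_def P2_def by (rule past_set_Ipast_set)+
  ultimately have "P1 = P \<or> P2 = P"
    using IP unfolding IP_def by blast
  moreover have "u \<notin> P2"
    unfolding P2_def mem_Ipast_set by blast
  ultimately have "v \<in> P1"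
    using \<open>u \<in> P\<close> \<open>v \<in> P\<close> by blast
  then show ?thesis
    unfolding P1_def mem_Ipast_set by blast
qed

lemma future_chain_less: "future_chain tau x \<Longrightarrow> m < n \<Longrightarrow> chr tau (x m) (x n)"
proof (induction n)
  case (Suc n)
  then have "chr tau (x n) (x (Suc n))"
    unfolding future_chain_def by blast
  with Suc show ?case
    by (metis chr_trans less_antisym)
qed simp

lemma future_chain_chr_mono:
  "future_chain tau x \<Longrightarrow> m \<le> n \<Longrightarrow> chr tau w (x m) \<Longrightarrow> chr tau w (x n)"
  by (metis chr_trans future_chain_less le_neq_implies_less)

lemma past_chain_chr_mono:
  "past_chain tau x \<Longrightarrow> m \<le> n \<Longrightarrow> chr tau (x m) w \<Longrightarrow> chr tau (x n) w"
  using separable_lorentzian_space.future_chain_chr_mono[OF time_reversed] by simp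

text \<open>Separability provides a countable dense subset S; the chain is built to dominate
  an enumeration of S \<inter> P one element at a time.\<close>

lemma IP_future_chain:
  assumes IP: "IP tau P"
  obtains x where "future_chain tau x" and "Ipast_set tau (range x) = P"
proof -
  obtain S where "countable S" and S: "\<And>x y. chr tau x y \<Longrightarrow> \<exists>s\<in>S. chr tau x s \<and> chr tau s y"
    using separable unfolding separable_lms_def by blast
  have past: "past_set tau P"
    using IP by (rule IP_past_set)
  have dense: "\<exists>s\<in>S \<inter> P. chr tau w s" if "w \<in> P" for w
  proof -
    obtain a where "a \<in> P" "chr tau w a"
      using past_set_has_later[OF past \<open>w \<in> P\<close>] by blast
    moreover obtain s where "s \<in> S" "chr tau w s" "chr tau s a"
      using S[OF \<open>chr tau w a\<close>] by blast
    ultimately show ?thesis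
      using past_set_downward_closed[OF past] by blast
  qed
  have "S \<inter> P \<noteq> {}"
    using IP_nonempty[OF IP] dense by blast
  define t where "t = from_nat_into (S \<inter> P)"
  have t: "range t = S \<inter> P"
    unfolding t_def using \<open>S \<inter> P \<noteq> {}\<close> \<open>countable S\<close> by (simp add: range_from_nat_into)
  define x where "x = rec_nat (t 0) (\<lambda>n xn. SOME w. w \<in> P \<and> chr tau xn w \<and> chr tau (t (Suc n)) w)"
  have x_0: "x 0 = t 0" and x_Suc: "x (Suc n) = (SOME w. w \<in> P \<and> chr tau (x n) w \<and> chr tau (t (Suc n)) w)" for n
    unfolding x_def by simp_all
  have step: "x n \<in> P \<and> (n > 0 \<longrightarrow> chr tau (x (n - 1)) (x n) \<and> chr tau (t n) (x n))" for n
  proof (induction n)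
    case 0
    then show ?case
      using t x_0 by auto
  next
    case (Suc n)
    then have "\<exists>w. w \<in> P \<and> chr tau (x n) w \<and> chr tau (t (Suc n)) w"
      using IP_directed[OF IP] t by blast
    then show ?case
      using someI_ex by (simp add: x_Suc)
  qed
  have "future_chain tau x"
    unfolding future_chain_def using step by (metis diff_Suc_1 zero_less_Suc)
  moreover have "Ipast_set tau (range x) = P"
  proof
    show "Ipast_set tau (range x) \<subseteq> P"
      unfolding mem_Ipast_set subset_iff using past_set_downward_closed[OF past] step by blast
    show "P \<subseteq> Ipast_set tau (range x)"
    proof
      fix w assume "w \<in> P"
      then obtain k where k: "chr tau w (t k)"
        using dense t by (metis rangeE)
      have "chr tau w (x k)"
      proof (cases k)
        case 0
        then show ?thesis
          using k x_0 by simp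
      next
        case (Suc m)
        then show ?thesis
          using step[of k] chr_trans[OF k] by simp
      qed
      then show "w \<in> Ipast_set tau (range x)"
        unfolding mem_Ipast_set by blast
    qed
  qed
  ultimately show ?thesis
    using that by blast
qed

lemma IF_past_chain:
  assumes "IF tau F"
  obtains x where "past_chain tau x" and "Ifut_set tau (range x) = F"
  using separable_lorentzian_space.IP_future_chain[OF time_reversed, of F] assms by auto

lemma future_chain_Ipast_set_subset_LI:
  assumes "future_chain tau x" and "\<And>n. x n \<in> A n" and "\<And>n. past_set tau (A n)"
  shows "Ipast_set tau (range x) \<subseteq> LI A"
proof
  fix w assume "w \<in> Ipast_set tau (range x)"
  then obtain m where "chr tau w (x m)"
    unfolding mem_Ipast_set by blast
  then have "w \<in> A n" if "m \<le> n" for n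
    using past_set_downward_closed[OF assms(3) assms(2)] future_chain_chr_mono[OF assms(1) that]
    by blast
  then show "w \<in> LI A"
    unfolding LI_def eventually_sequentially by blast
qed

lemma past_chain_Ifut_set_subset_LI:
  assumes "past_chain tau x" and "\<And>n. x n \<in> A n" and "\<And>n. future_set tau (A n)"
  shows "Ifut_set tau (range x) \<subseteq> LI A"
  using separable_lorentzian_space.future_chain_Ipast_set_subset_LI[OF time_reversed, of x A] assms
  by simp

lemma S_rel_ne_chr:
  assumes "S_rel_ne tau P F" and "w \<in> P" and "f \<in> F"
  shows "chr tau w f"
proof -
  have "w \<in> common_past tau F"
    using assms(1,2) unfolding S_rel_ne_def maxIP_in_def by blast
  then obtain a where "chr tau w a" "\<forall>q\<in>F. chr tau a q"
    unfolding common_past_def mem_Ipast_set by blast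
  then show ?thesis
    using chr_trans assms(3) by blast
qed

lemma reverse_triangle: "chr tau x y \<Longrightarrow> chr tau y z \<Longrightarrow> tau x y + tau y z \<le> tau x z"
  using lms unfolding lorentzian_metric_space_def chr_def by blast

lemma incseq_tau_chains:
  assumes q: "past_chain tau q" and p: "future_chain tau p"
  shows "incseq (\<lambda>n. tau (q n) (p n))"
proof (rule incseq_SucI)
  fix n
  show "tau (q n) (p n) \<le> tau (q (Suc n)) (p (Suc n))"
  proof (cases "chr tau (q n) (p n)")
    case True
    have q_step: "chr tau (q (Suc n)) (q n)" and p_step: "chr tau (p n) (p (Suc n))"
      using q p unfolding past_chain_def future_chain_def by blast+
    have "tau (q n) (p n) \<le> tau (q (Suc n)) (q n) + tau (q n) (p n)"
      by simp
    also have "\<dots> \<le> tau (q (Suc n)) (p n)"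
      using reverse_triangle[OF q_step True] .
    also have "\<dots> \<le> tau (q (Suc n)) (p n) + tau (p n) (p (Suc n))"
      by simp
    also have "\<dots> \<le> tau (q (Suc n)) (p (Suc n))"
      using reverse_triangle[OF chr_trans[OF q_step True] p_step] .
    finally show ?thesis .
  qed (simp add: chr_def)
qed

text \<open>The limit in the definition of the extended time separation is the supremum of
  an increasing sequence, so it is positive as soon as one term is.\<close>

lemma ctau_pos_iff:
  assumes IF: "IF tau (snd a)" and IP: "IP tau (fst b)"
  shows "0 < ctau tau a b \<longleftrightarrow> (\<exists>u\<in>snd a. \<exists>v\<in>fst b. chr tau u v)"
proof -
  define q where "q = (SOME q. past_chain tau q \<and> Ifut_set tau (range q) = snd a)"
  define p where "p = (SOME p. future_chain tau p \<and> Ipast_set tau (range p) = fst b)"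
  have "\<exists>q. past_chain tau q \<and> Ifut_set tau (range q) = snd a"
    using IF_past_chain[OF IF] by metis
  then have q: "past_chain tau q \<and> Ifut_set tau (range q) = snd a"
    unfolding q_def by (rule someI_ex)
  have "\<exists>p. future_chain tau p \<and> Ipast_set tau (range p) = fst b"
    using IP_future_chain[OF IP] by metis
  then have p: "future_chain tau p \<and> Ipast_set tau (range p) = fst b"
    unfolding p_def by (rule someI_ex)
  have "(\<lambda>n. tau (q n) (p n)) \<longlonglongrightarrow> (SUP n. tau (q n) (p n))"
    using incseq_tau_chains q p by (simp add: LIMSEQ_SUP)
  then have "ctau tau a b = (SUP n. tau (q n) (p n))"
    using IF_nonempty[OF IF] IP_nonempty[OF IP]
    unfolding ctau_def Let_def q_def[symmetric] p_def[symmetric] by (simp add: limI)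
  then have "0 < ctau tau a b \<longleftrightarrow> (\<exists>n. chr tau (q n) (p n))"
    by (simp add: less_SUP_iff chr_def)
  also have "\<dots> \<longleftrightarrow> (\<exists>u\<in>snd a. \<exists>v\<in>fst b. chr tau u v)"
  proof
    assume "\<exists>n. chr tau (q n) (p n)"
    moreover have "q n \<in> snd a" "p n \<in> fst b" for n
      using past_chain_in_Ifut_set[of tau q n] future_chain_in_Ipast_set[of tau p n] q p by simp_all
    ultimately show "\<exists>u\<in>snd a. \<exists>v\<in>fst b. chr tau u v"
      by blast
  next
    assume "\<exists>u\<in>snd a. \<exists>v\<in>fst b. chr tau u v"
    then obtain u v where uv: "u \<in> snd a" "v \<in> fst b" "chr tau u v"
      by blast
    have "u \<in> Ifut_set tau (range q)" "v \<in> Ipast_set tau (range p)"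
      using uv q p by simp_all
    then obtain m m' where m: "chr tau (q m) u" and m': "chr tau v (p m')"
      unfolding mem_Ifut_set mem_Ipast_set by blast
    have "chr tau (q (max m m')) u"
      using past_chain_chr_mono[of q m "max m m'" u] q m by simp
    moreover have "chr tau v (p (max m m'))"
      using future_chain_chr_mono[of p m' "max m m'" v] p m' by simp
    ultimately have "chr tau (q (max m m')) (p (max m m'))"
      using chr_trans uv(3) by meson
    then show "\<exists>n. chr tau (q n) (p n)" ..
  qed
  finally show ?thesis .
qed

lemma cchr_iff:
  assumes "a \<in> cX tau" and "b \<in> cX tau"
  shows "cchr tau a b \<longleftrightarrow> (\<exists>u\<in>snd a. \<exists>v\<in>fst b. chr tau u v)"
proof (cases "snd a = {} \<or> fst b = {}")
  case True
  then show ?thesis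
    unfolding cchr_def ctau_def by auto
next
  case False
  then have "IF tau (snd a)" "IP tau (fst b)"
    using cX_IF_snd cX_IP_fst assms by blast+
  then show ?thesis
    unfolding cchr_def by (rule ctau_pos_iff)
qed

lemma cchr_fst_mono:
  assumes a: "a \<in> cX tau" and b: "b \<in> cX tau" and "cchr tau a b"
  shows "fst a \<subseteq> fst b"
proof
  fix w assume w: "w \<in> fst a"
  obtain u v where uv: "u \<in> snd a" "v \<in> fst b" "chr tau u v"
    using cchr_iff[OF a b] \<open>cchr tau a b\<close> by blast
  have "S_rel_ne tau (fst a) (snd a)"
    using S_rel_nonempty[of tau "fst a" "snd a"] a w uv(1) by (auto simp: mem_cX)
  then have "chr tau w v"
    using S_rel_ne_chr w uv(1,3) chr_trans by meson
  moreover have "past_set tau (fst b)"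
    using IP_past_set cX_IP_fst[OF b] uv(2) by blast
  ultimately show "w \<in> fst b"
    using past_set_downward_closed uv(2) by meson
qed

lemma cchr_snd_mono: "b \<in> cX tau \<Longrightarrow> c \<in> cX tau \<Longrightarrow> cchr tau b c \<Longrightarrow> snd c \<subseteq> snd b"
  using separable_lorentzian_space.cchr_fst_mono[OF time_reversed, of "prod.swap c" "prod.swap b"]
  by simp

end

section \<open>The chronological topology\<close>

lemma LI_subset_LS: "LI A \<subseteq> LS A"
  unfolding LI_def LS_def using eventually_frequently[OF sequentially_bot] by blast

lemma LI_subseq: "strict_mono r \<Longrightarrow> LI A \<subseteq> LI (\<lambda>n. A (r n))"
  unfolding LI_def using eventually_subseq by blast

lemma LS_subseq: "strict_mono r \<Longrightarrow> LS (\<lambda>n. A (r n)) \<subseteq> LS A"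
  unfolding LS_def frequently_def using eventually_subseq by blast

lemma maxIP_in_antimono: "maxIP_in tau P A \<Longrightarrow> P \<subseteq> B \<Longrightarrow> B \<subseteq> A \<Longrightarrow> maxIP_in tau P B"
  unfolding maxIP_in_def by blast

lemma maxIF_in_antimono: "maxIF_in tau F A \<Longrightarrow> F \<subseteq> B \<Longrightarrow> B \<subseteq> A \<Longrightarrow> maxIF_in tau F B"
  unfolding maxIF_in_def by blast

lemma chr_limits_subseq:
  assumes r: "strict_mono r"
  shows "chr_limits tau s \<subseteq> chr_limits tau (\<lambda>n. s (r n))"
proof
  fix q assume q: "q \<in> chr_limits tau s"
  have sub: "X \<subseteq> LI (\<lambda>n. A (r n)) \<and> X \<subseteq> LS (\<lambda>n. A (r n)) \<and> LS (\<lambda>n. A (r n)) \<subseteq> LS A"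
    if "X \<subseteq> LI A" for X and A :: "nat \<Rightarrow> 'a set"
    using that LI_subseq[OF r, of A] LI_subset_LS[of "\<lambda>n. A (r n)"] LS_subseq[OF r, of A] by blast
  have "fst q \<subseteq> LI (\<lambda>n. fst (s (r n))) \<and> maxIP_in tau (fst q) (LS (\<lambda>n. fst (s (r n))))"
    if "fst q \<noteq> {}"
    using q that sub[of "fst q" "\<lambda>n. fst (s n)"] maxIP_in_antimono
    unfolding chr_limits_iff by blast
  moreover have "snd q \<subseteq> LI (\<lambda>n. snd (s (r n))) \<and> maxIF_in tau (snd q) (LS (\<lambda>n. snd (s (r n))))"
    if "snd q \<noteq> {}"
    using q that sub[of "snd q" "\<lambda>n. snd (s n)"] maxIF_in_antimono
    unfolding chr_limits_iff by blast
  ultimately show "q \<in> chr_limits tau (\<lambda>n. s (r n))"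
    using q unfolding chr_limits_iff by blast
qed

lemma chr_closedD: "chr_closed tau C \<Longrightarrow> (\<And>n. s n \<in> C) \<Longrightarrow> chr_limits tau s \<subseteq> C"
  unfolding chr_closed_def by blast

lemma chr_closed_subseq:
  assumes C: "chr_closed tau C" and inf: "infinite {n. s n \<in> C}"
  shows "chr_limits tau s \<subseteq> C"
proof -
  obtain r :: "nat \<Rightarrow> nat" where r: "strict_mono r" "\<And>n. s (r n) \<in> C"
    using infinite_enumerate[OF inf] by blast
  have "chr_limits tau (\<lambda>n. s (r n)) \<subseteq> C"
    using chr_closedD[OF C r(2)] .
  then show ?thesis
    using chr_limits_subseq[OF r(1)] by blast
qed

lemma chr_closed_Un:
  assumes A: "chr_closed tau A" and B: "chr_closed tau B"
  shows "chr_closed tau (A \<union> B)"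
  unfolding chr_closed_def
proof (intro conjI allI impI)
  show "A \<union> B \<subseteq> cX tau"
    using A B unfolding chr_closed_def by blast
  fix s :: "nat \<Rightarrow> 'a set \<times> 'a set"
  assume "\<forall>n. s n \<in> A \<union> B"
  then have "{n. s n \<in> A} \<union> {n. s n \<in> B} = UNIV"
    by blast
  then have "infinite {n. s n \<in> A} \<or> infinite {n. s n \<in> B}"
    by (metis finite_UnI infinite_UNIV_nat)
  then show "chr_limits tau s \<subseteq> A \<union> B"
    using chr_closed_subseq[OF A] chr_closed_subseq[OF B] by blast
qed

lemma istopology_sigma_chr: "istopology (\<lambda>U. U \<subseteq> cX tau \<and> chr_closed tau (cX tau - U))"
proof -
  have "chr_closed tau (cX tau - S \<inter> T)"
    if "chr_closed tau (cX tau - S)" "chr_closed tau (cX tau - T)" for S T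
  proof -
    have "cX tau - S \<inter> T = (cX tau - S) \<union> (cX tau - T)"
      by blast
    then show ?thesis
      using chr_closed_Un[OF that] by simp
  qed
  moreover have "chr_closed tau (cX tau - \<Union>K)"
    if K: "\<forall>U\<in>K. chr_closed tau (cX tau - U)" for K
    unfolding chr_closed_def
  proof (intro conjI allI impI subsetI)
    fix s q assume s: "\<forall>n. s n \<in> cX tau - \<Union>K" and q: "q \<in> chr_limits tau s"
    have "q \<in> cX tau - U" if "U \<in> K" for U
      using chr_closedD[of tau "cX tau - U" s] K s q that by blast
    moreover have "q \<in> cX tau"
      using q unfolding chr_limits_iff by blast
    ultimately show "q \<in> cX tau - \<Union>K"
      by blast
  qed auto
  ultimately show ?thesis
    unfolding istopology_def by blast
qed

lemma openin_sigma_chr: "openin (sigma_chr tau) U \<longleftrightarrow> U \<subseteq> cX tau \<and> chr_closed tau (cX tau - U)"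
  unfolding sigma_chr_def topology_inverse'[OF istopology_sigma_chr] ..

text \<open>A chronological limit whose past contains u forces u into the pasts of almost all
  terms of the sequence, by the lower-limit condition.\<close>

lemma openin_sigma_chr_membership:
  "openin (sigma_chr tau) {c \<in> cX tau. (A \<longrightarrow> u \<in> fst c) \<and> (B \<longrightarrow> v \<in> snd c)}"
  (is "openin _ ?V")
  unfolding openin_sigma_chr chr_closed_def
proof (intro conjI allI impI subsetI)
  fix s q assume s: "\<forall>n. s n \<in> cX tau - ?V" and q: "q \<in> chr_limits tau s"
  show "q \<in> cX tau - ?V"
  proof
    show "q \<in> cX tau"
      using q unfolding chr_limits_iff by blast
    show "q \<notin> ?V"
    proof
      assume "q \<in> ?V"
      then have "eventually (\<lambda>n. A \<longrightarrow> u \<in> fst (s n)) sequentially"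
        and "eventually (\<lambda>n. B \<longrightarrow> v \<in> snd (s n)) sequentially"
        using q unfolding chr_limits_iff LI_def by (auto simp: subset_iff)
      then have "eventually (\<lambda>n. False) sequentially"
        by eventually_elim (use s in auto)
      then show False
        by simp
    qed
  qed
qed auto

section \<open>Globally hyperbolic spaces with an antichain boundary\<close>

lemma compactin_frequent_cluster_point:
  assumes K: "compactin X K" and x: "\<And>n. x n \<in> K"
  obtains z where "z \<in> K" and "\<And>U. openin X U \<Longrightarrow> z \<in> U \<Longrightarrow> \<exists>\<^sub>F n in sequentially. x n \<in> U"
proof (rule ccontr)
  assume no_cluster: \<open>\<not> thesis\<close>
  define \<U> where "\<U> = {U. openin X U \<and> eventually (\<lambda>n. x n \<notin> U) sequentially}"
  have "K \<subseteq> \<Union>\<U>"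
  proof
    fix z assume "z \<in> K"
    have "\<not> (\<forall>U. openin X U \<longrightarrow> z \<in> U \<longrightarrow> (\<exists>\<^sub>F n in sequentially. x n \<in> U))"
    proof
      assume "\<forall>U. openin X U \<longrightarrow> z \<in> U \<longrightarrow> (\<exists>\<^sub>F n in sequentially. x n \<in> U)"
      then have thesis
        by (intro that[OF \<open>z \<in> K\<close>]) blast
      with no_cluster show False ..
    qed
    then obtain U where "openin X U" "z \<in> U" "\<not> (\<exists>\<^sub>F n in sequentially. x n \<in> U)"
      by blast
    then show "z \<in> \<Union>\<U>"
      unfolding \<U>_def not_frequently by blast
  qed
  moreover have "openin X U" if "U \<in> \<U>" for U
    using that unfolding \<U>_def by blast
  ultimately obtain \<F> where "finite \<F>" "\<F> \<subseteq> \<U>" "K \<subseteq> \<Union>\<F>"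
    using compactinD[OF K, of \<U>] by blast
  have "\<forall>U\<in>\<F>. eventually (\<lambda>n. x n \<notin> U) sequentially"
    using \<open>\<F> \<subseteq> \<U>\<close> unfolding \<U>_def by blast
  then have "eventually (\<lambda>n. \<forall>U\<in>\<F>. x n \<notin> U) sequentially"
    by (rule eventually_ball_finite[OF \<open>finite \<F>\<close>])
  then have "eventually (\<lambda>n. False) sequentially"
    by eventually_elim (use x \<open>K \<subseteq> \<Union>\<F>\<close> in blast)
  then show False
    by simp
qed

locale hyperbolic_c_completion = separable_lorentzian_space +
  fixes le :: "'a \<Rightarrow> 'a \<Rightarrow> bool"
  assumes full: "full tau"
    and S_prop: "S_property tau"
    and glob_hyp: "globally_hyperbolic sig tau le"
    and boundary_antichain: "\<forall>a\<in>cboundary tau. \<forall>b\<in>cboundary tau. cle tau a b \<longrightarrow> a = b"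
begin

lemma time_reversed_completion: "hyperbolic_c_completion sig (time_reversal tau) (\<lambda>x y. le y x)"
proof -
  have "a = b" if "prod.swap a \<in> cboundary tau" "prod.swap b \<in> cboundary tau"
    and "cle tau (prod.swap b) (prod.swap a)" for a b
    using boundary_antichain that by (metis swap_swap)
  then show ?thesis
    using time_reversed full S_prop globally_hyperbolic_time_reversal[OF glob_hyp]
    unfolding hyperbolic_c_completion_def hyperbolic_c_completion_axioms_def by simp
qed

lemma causal_refl: "le x x"
  and chr_imp_causal: "chr tau x y \<Longrightarrow> le x y"
  and compactin_Jdiamond: "compactin sig (Jdiamond le x y)"
  using glob_hyp unfolding globally_hyperbolic_def compatible_causal_def by blast+

lemma PIP_S_rel_ne: "S_rel_ne tau (Ipast tau z) (Ifut tau z)"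
proof (rule S_rel_nonempty)
  show "S_rel tau (Ipast tau z) (Ifut tau z)"
    using S_prop unfolding S_property_def by (rule allE) (erule conjunct1)
  show "Ipast tau z \<noteq> {}" "Ifut tau z \<noteq> {}"
    using full unfolding full_def by blast+
qed

lemma cinj_notin_empty_future: "(P, {}) \<notin> range (cinj tau)"
  using full unfolding full_def cinj_def by auto

text \<open>A future chain generating P stays in the compact diamond J(x 0, y), so it has a
  cluster point z; then I^-(z) lies inside P, and the S-property makes I^-(z) maximal.\<close>

lemma bounded_IP_is_PIP:
  assumes IP: "IP tau P" and bound: "\<And>w. w \<in> P \<Longrightarrow> chr tau w y"
  obtains z where "P = Ipast tau z"
proof -
  obtain x where x: "future_chain tau x" "Ipast_set tau (range x) = P"
    using IP_future_chain[OF IP] .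
  have xP: "x n \<in> P" for n
    using future_chain_in_Ipast_set[OF x(1)] x(2) by blast
  have "le (x 0) (x n)" for n
    using causal_refl chr_imp_causal future_chain_less[OF x(1), of 0 n] by (cases n) auto
  then have "x n \<in> Jdiamond le (x 0) y" for n
    unfolding Jdiamond_def using chr_imp_causal[OF bound[OF xP]] by blast
  then obtain z where cluster: "\<And>U. openin sig U \<Longrightarrow> z \<in> U \<Longrightarrow> \<exists>\<^sub>F n in sequentially. x n \<in> U"
    using compactin_frequent_cluster_point[OF compactin_Jdiamond] by blast
  have "Ipast tau z \<subseteq> P"
  proof
    fix v assume "v \<in> Ipast tau z"
    then have "\<exists>\<^sub>F n in sequentially. x n \<in> Ifut tau v"
      using cluster[OF openin_Ifut] by (simp add: Ipast_def Ifut_def)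
    then obtain n where "chr tau v (x n)"
      unfolding Ifut_def by (auto dest: frequently_ex)
    then show "v \<in> P"
      using past_set_downward_closed[OF IP_past_set[OF IP] xP] by blast
  qed
  moreover have "P \<subseteq> common_past tau (Ifut tau z)"
  proof (rule past_set_subset_common_past[OF IP_past_set[OF IP]])
    fix w f assume "w \<in> P" "f \<in> Ifut tau z"
    then have "w \<in> Ipast_set tau (range x)"
      using x(2) by simp
    then obtain m where m: "chr tau w (x m)"
      unfolding mem_Ipast_set by blast
    have "\<exists>\<^sub>F n in sequentially. x n \<in> Ipast tau f"
      using cluster[OF openin_Ipast] \<open>f \<in> Ifut tau z\<close> by (simp add: Ipast_def Ifut_def)
    then obtain n where "m \<le> n" "chr tau (x n) f"
      unfolding frequently_sequentially Ipast_def by blast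
    then show "chr tau w f"
      using future_chain_chr_mono[OF x(1) _ m] chr_trans by blast
  qed
  ultimately have "P = Ipast tau z"
    using PIP_S_rel_ne IP unfolding S_rel_ne_def maxIP_in_def by blast
  then show thesis
    by (rule that)
qed

text \<open>Here the antichain hypothesis on the boundary enters: a boundary point (P, {})
  is below (P', {}) whenever P is contained in P'.\<close>

lemma boundary_IP_maximal:
  assumes p: "(P, {}) \<in> cX tau" and IP': "IP tau P'" and "P \<subseteq> P'"
  shows "P' = P"
proof (cases "\<exists>F'. F' \<noteq> {} \<and> S_rel_ne tau P' F'")
  case True
  have IP: "IP tau P" and no_future: "\<not> (\<exists>F. F \<noteq> {} \<and> S_rel_ne tau P F)"
    using p unfolding mem_cX S_rel_def by auto
  obtain F' y where "S_rel_ne tau P' F'" "y \<in> F'"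
    using True by blast
  then have "chr tau w y" if "w \<in> P" for w
    using S_rel_ne_chr \<open>P \<subseteq> P'\<close> that by blast
  then obtain z where "P = Ipast tau z"
    using bounded_IP_is_PIP[OF IP] by blast
  then have False
    using no_future PIP_S_rel_ne full unfolding full_def by blast
  then show ?thesis ..
next
  case False
  then have p': "(P', {}) \<in> cX tau"
    using IP' IP_nonempty unfolding mem_cX S_rel_def by auto
  have "cIpast tau (P, {}) \<subseteq> cIpast tau (P', {})"
    unfolding cIpast_def using cchr_iff p p' \<open>P \<subseteq> P'\<close> by fastforce
  moreover have "cIfut tau (P', {}) = {}"
    unfolding cIfut_def using cchr_iff p' by auto
  ultimately have "cle tau (P, {}) (P', {})"
    unfolding cle_def by blast
  moreover have "(P, {}) \<in> cboundary tau" "(P', {}) \<in> cboundary tau"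
    using p p' cinj_notin_empty_future unfolding cboundary_def by blast+
  ultimately show ?thesis
    using boundary_antichain by blast
qed

lemma maxIP_in_LS:
  assumes p: "(P, F) \<in> cX tau" and "P \<noteq> {}" and b: "\<And>n. b n \<in> cX tau"
    and P_LI: "P \<subseteq> LI (\<lambda>n. fst (b n))" and F_LI: "F \<subseteq> LI (\<lambda>n. snd (b n))"
  shows "maxIP_in tau P (LS (\<lambda>n. fst (b n)))"
  unfolding maxIP_in_def
proof (intro conjI allI impI)
  show "IP tau P"
    using cX_IP_fst[OF p] \<open>P \<noteq> {}\<close> by simp
  show "P \<subseteq> LS (\<lambda>n. fst (b n))"
    using P_LI LI_subset_LS[of "\<lambda>n. fst (b n)"] by blast
  fix P' assume P': "IP tau P' \<and> P \<subseteq> P' \<and> P' \<subseteq> LS (\<lambda>n. fst (b n))"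
  show "P' = P"
  proof (cases "F = {}")
    case True
    then show ?thesis
      using boundary_IP_maximal p P' by blast
  next
    case False
    have "P' \<subseteq> common_past tau F"
    proof (rule past_set_subset_common_past)
      show "past_set tau P'"
        using P' IP_past_set by blast
      fix w f assume "w \<in> P'" "f \<in> F"
      obtain f' where "f' \<in> F" "chr tau f' f"
        using future_set_has_earlier[OF IF_future_set[OF cX_IF_snd[OF p]]] \<open>f \<in> F\<close> by auto
      have "\<exists>\<^sub>F n in sequentially. w \<in> fst (b n)"
        using P' \<open>w \<in> P'\<close> unfolding LS_def by auto
      moreover have "eventually (\<lambda>n. f' \<in> snd (b n)) sequentially"
        using F_LI \<open>f' \<in> F\<close> unfolding LI_def by auto
      ultimately have "\<exists>\<^sub>F n in sequentially. w \<in> fst (b n) \<and> f' \<in> snd (b n)"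
        by (rule frequently_eventually_frequently)
      then obtain n where n: "w \<in> fst (b n)" "f' \<in> snd (b n)"
        by (auto dest: frequently_ex)
      then have "S_rel_ne tau (fst (b n)) (snd (b n))"
        using S_rel_nonempty[of tau "fst (b n)" "snd (b n)"] b[of n] by (auto simp: mem_cX)
      then have "chr tau w f'"
        using S_rel_ne_chr n by blast
      then show "chr tau w f"
        using chr_trans \<open>chr tau f' f\<close> by blast
    qed
    moreover have "maxIP_in tau P (common_past tau F)"
      using S_rel_nonempty[of tau P F] p \<open>P \<noteq> {}\<close> False by (simp add: mem_cX S_rel_ne_def)
    ultimately show ?thesis
      using P' unfolding maxIP_in_def by blast
  qed
qed

lemma chr_limitsI:
  assumes p: "(P, F) \<in> cX tau" and b: "\<And>n. b n \<in> cX tau"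
    and P_LI: "P \<subseteq> LI (\<lambda>n. fst (b n))" and F_LI: "F \<subseteq> LI (\<lambda>n. snd (b n))"
  shows "(P, F) \<in> chr_limits tau b"
proof -
  have "maxIF_in tau F (LS (\<lambda>n. snd (b n)))" if "F \<noteq> {}"
    using hyperbolic_c_completion.maxIP_in_LS[OF time_reversed_completion, of F P "\<lambda>n. prod.swap (b n)"]
      assms that by simp
  then show ?thesis
    using maxIP_in_LS[OF p _ b P_LI F_LI] assms unfolding chr_limits_iff by auto
qed

text \<open>The neighbourhoods V n demand the n-th points of chains generating P and F; any b n
  squeezed chronologically between points of V n inherits them.\<close>

lemma chr_limit_of_squeezed_sequences:
  assumes p: "p \<in> cX tau"
  obtains V where "\<And>n. openin (sigma_chr tau) (V n)" and "\<And>n. p \<in> V n"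
    and "\<And>b. (\<And>n. b n \<in> cX tau) \<Longrightarrow> (\<And>n. \<exists>a\<in>V n. cchr tau a (b n)) \<Longrightarrow>
           (\<And>n. \<exists>c\<in>V n. cchr tau (b n) c) \<Longrightarrow> p \<in> chr_limits tau b"
proof -
  obtain x where x: "fst p \<noteq> {} \<Longrightarrow> future_chain tau x \<and> Ipast_set tau (range x) = fst p"
    using IP_future_chain cX_IP_fst[OF p] by metis
  obtain y where y: "snd p \<noteq> {} \<Longrightarrow> past_chain tau y \<and> Ifut_set tau (range y) = snd p"
    using IF_past_chain cX_IF_snd[OF p] by metis
  define V where "V n = {c \<in> cX tau. (fst p \<noteq> {} \<longrightarrow> x n \<in> fst c) \<and> (snd p \<noteq> {} \<longrightarrow> y n \<in> snd c)}"
    for n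
  have V_open: "openin (sigma_chr tau) (V n)" for n
    unfolding V_def by (rule openin_sigma_chr_membership)
  have "p \<in> V n" for n
    using p x y future_chain_in_Ipast_set past_chain_in_Ifut_set unfolding V_def by fastforce
  moreover have "p \<in> chr_limits tau b"
    if b: "\<And>n. b n \<in> cX tau" and below: "\<And>n. \<exists>a\<in>V n. cchr tau a (b n)"
      and above: "\<And>n. \<exists>c\<in>V n. cchr tau (b n) c" for b
  proof -
    have V_cX: "V n \<subseteq> cX tau" for n
      unfolding V_def by blast
    have "fst p \<subseteq> LI (\<lambda>n. fst (b n))"
    proof (cases "fst p = {}")
      case False
      have "x n \<in> fst (b n)" for n
        using below[of n] cchr_fst_mono V_cX b False unfolding V_def by blast
      then show ?thesis
        using future_chain_Ipast_set_subset_LI[of x "\<lambda>n. fst (b n)"] x False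
          IP_past_set cX_IP_fst b by blast
    qed simp
    moreover have "snd p \<subseteq> LI (\<lambda>n. snd (b n))"
    proof (cases "snd p = {}")
      case False
      have "y n \<in> snd (b n)" for n
        using above[of n] cchr_snd_mono V_cX b False unfolding V_def by blast
      then show ?thesis
        using past_chain_Ifut_set_subset_LI[of y "\<lambda>n. snd (b n)"] y False
          IF_future_set cX_IF_snd b by blast
    qed simp
    ultimately show ?thesis
      using chr_limitsI[of "fst p" "snd p" b] p b by simp
  qed
  ultimately show ?thesis
    using that V_open by blast
qed

lemma chr_diamond_neighbourhood:
  assumes p: "p \<in> cX tau" and W: "openin (sigma_chr tau) W" "p \<in> W"
  obtains V where "openin (sigma_chr tau) V" and "p \<in> V"
    and "\<And>a b c. b \<in> cX tau \<Longrightarrow> cchr tau a b \<Longrightarrow> cchr tau b c \<Longrightarrow> a \<in> V \<Longrightarrow> c \<in> V \<Longrightarrow> b \<in> W"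
proof -
  obtain V where V_open: "\<And>n. openin (sigma_chr tau) (V n)" and p_V: "\<And>n. p \<in> V n"
    and squeezed: "\<And>b. (\<And>n. b n \<in> cX tau) \<Longrightarrow> (\<And>n. \<exists>a\<in>V n. cchr tau a (b n)) \<Longrightarrow>
                     (\<And>n. \<exists>c\<in>V n. cchr tau (b n) c) \<Longrightarrow> p \<in> chr_limits tau b"
    using chr_limit_of_squeezed_sequences[OF p] by blast
  show thesis
  proof (rule ccontr)
    assume "\<not> thesis"
    then have "\<exists>b. b \<in> cX tau - W \<and> (\<exists>a\<in>V n. cchr tau a b) \<and> (\<exists>c\<in>V n. cchr tau b c)" for n
      using that[OF V_open p_V] by blast
    then obtain b where b: "\<And>n. b n \<in> cX tau - W"
      and "\<And>n. \<exists>a\<in>V n. cchr tau a (b n)" "\<And>n. \<exists>c\<in>V n. cchr tau (b n) c"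
      by metis
    then have "p \<in> chr_limits tau b"
      using squeezed by blast
    moreover have "chr_limits tau b \<subseteq> cX tau - W"
      using W(1) chr_closedD[of tau "cX tau - W" b] b unfolding openin_sigma_chr by blast
    ultimately show False
      using W(2) by blast
  qed
qed

end

theorem mainTheorem11:
  fixes sig :: "'a topology" and tau :: "'a \<Rightarrow> 'a \<Rightarrow> ennreal"
    and le :: "'a \<Rightarrow> 'a \<Rightarrow> bool"
  assumes "lorentzian_metric_space sig tau"
    and "full tau"
    and "separable_lms tau"
    and "chron_dense sig tau"
    and "S_property tau"
    and "globally_hyperbolic sig tau le"
    and "\<forall>a\<in>cboundary tau. \<forall>b\<in>cboundary tau. cle tau a b \<longrightarrow> a = b"
    and "p \<in> cX tau"
    and "nbhd (sigma_chr tau) U p"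
  shows "\<exists>V. nbhd (sigma_chr tau) V p \<and>
           (\<forall>a\<in>cX tau. \<forall>b\<in>cX tau. \<forall>c\<in>cX tau.
              cchr tau a b \<and> cchr tau b c \<and> a \<in> V \<and> c \<in> V \<longrightarrow> b \<in> U)"
proof -
  have "hyperbolic_c_completion sig tau le"
    unfolding hyperbolic_c_completion_def hyperbolic_c_completion_axioms_def
      separable_lorentzian_space_def
    using assms(1-3,5-7) by blast
  then interpret hyperbolic_c_completion sig tau le .
  obtain W where W: "openin (sigma_chr tau) W" "p \<in> W" "W \<subseteq> U"
    using assms(9) unfolding nbhd_def by blast
  obtain V where "openin (sigma_chr tau) V" "p \<in> V"
    and "\<And>a b c. b \<in> cX tau \<Longrightarrow> cchr tau a b \<Longrightarrow> cchr tau b c \<Longrightarrow> a \<in> V \<Longrightarrow> c \<in> V \<Longrightarrow> b \<in> W"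
    using chr_diamond_neighbourhood[OF assms(8) W(1,2)] by blast
  then show ?thesis
    unfolding nbhd_def using W(3) by blast
qed

end
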